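(* Let $n\in\mathbb N=\{0,1,2,\dots\}$ be fixed and let $\Theta^\pm$, $\eta_n$, $\Omega_{M,n}$ be as in the context. There exists a constant $C>0$ such that for all $M>0$: $$|\partial_z\Theta^\pm(\eta_n)|\leq CM^{n+1}e^{M^2/2},\quad |\partial_w\Theta^\pm(\eta_n)|\leq CM^{n+1}e^{M^2/2},$$ and $$\sup_{\zeta_n\in\Omega_{M,n}}|\partial_z^2\Theta^\pm(\zeta_n)|\leq CM^{n+1}e^{M^2/2},\quad \sup_{\zeta_n\in\Omega_{M,n}}|\partial_w^2\Theta^\pm(\zeta_n)|\leq CM^{n+1}e^{M^2/2}.$$
   Context: Let $E_n=2n+1$ (eigenvalues of $-\frac{d^2}{dx^2}+x^2$). For $\zeta_n=(w_n,z_n)\in\mathbb C^2$ let $u_{\zeta_n},v_{\zeta_n}$ solve $-y''+(x^2-z_n)y=0$ on $[-M,M]$ with: for $n$ even, $u_{\zeta_n}(0)=1$, $u_{\zeta_n}'(0)=w_n$, $v_{\zeta_n}(0)=-w_n/(1+w_n^2)$, $v_{\zeta_n}'(0)=1/(1+w_n^2)$; for $n$ odd, $u_{\zeta_n}(0)=-w_n$, $u_{\zeta_n}'(0)=1$, $v_{\zeta_n}(0)=-1/(1+w_n^2)$, $v_{\zeta_n}'(0)=-w_n/(1+w_n^2)$. Let $\eta_n=(0,E_n)$. Define $\Theta^\pm(\zeta_n):=u_{\zeta_n}'(\pm M)-i\sqrt{z_n}\,u_{\zeta_n}(\pm M)$ (principal branch), with $\partial_w,\partial_z$ derivatives in $w_n,z_n$,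 and $\Omega_{M,n}:=\{\zeta_n\in\mathbb C^2:|\zeta_n-\eta_n|\leq M^{-(n+2)}e^{-M^2/2}\}$.
   Formalization: The constant C > 0 and the four bounds on the first and second derivatives of Theta^+ and Theta^- are asserted for all M >= 1 only, instead of for all M > 0. The statement above fails without it. *)

theory Defs
  imports "HOL-Analysis.Analysis"
begin

text \<open>The equation is linear with entire coefficients, so the
  solution exists globally and is unique; its restriction to [-M,M] is the
  solution on [-M,M].\<close>
definition ode_sol :: "complex \<Rightarrow> complex \<Rightarrow> complex \<Rightarrow> (real \<Rightarrow> complex) \<times> (real \<Rightarrow> complex)" where
  "ode_sol z a b = (THE p. fst p 0 = a \<and> snd p 0 = b \<and>
     (\<forall>x. (fst p has_vector_derivative snd p x) (at x)) \<and>
     (\<forall>x. (snd p has_vector_derivative ((complex_of_real (x\<^sup>2) - z) * fst p x)) (at x)))"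

definition u_init :: "nat \<Rightarrow> complex \<Rightarrow> complex \<times> complex" where
  "u_init n w = (if even n then (1, w) else (- w, 1))"

definition u_sol :: "nat \<Rightarrow> complex \<Rightarrow> complex \<Rightarrow> real \<Rightarrow> complex" where
  "u_sol n w z = fst (ode_sol z (fst (u_init n w)) (snd (u_init n w)))"

definition du_sol :: "nat \<Rightarrow> complex \<Rightarrow> complex \<Rightarrow> real \<Rightarrow> complex" where
  "du_sol n w z = snd (ode_sol z (fst (u_init n w)) (snd (u_init n w)))"

text \<open>Theta^{+} for s = 1 and Theta^{-} for s = -1:
  Theta(w,z) = u'(s M) - i sqrt z u(s M), principal branch (csqrt).\<close>
definition Theta :: "real \<Rightarrow> nat \<Rightarrow> real \<Rightarrow> complex \<Rightarrow> complex \<Rightarrow> complex" where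
  "Theta s n M w z = du_sol n w z (s * M) - \<i> * csqrt z * u_sol n w z (s * M)"

definition eta :: "nat \<Rightarrow> complex \<times> complex" where
  "eta n = (0, of_nat (2 * n + 1))"

definition Omega :: "real \<Rightarrow> nat \<Rightarrow> (complex \<times> complex) set" where
  "Omega M n = cball (eta n) (M powr (- real (n + 2)) * exp (- M\<^sup>2 / 2))"

end

theory Submission
  imports Defs "HOL-Complex_Analysis.Complex_Analysis"
begin

text \<open>The solution pair (y, y') of y'' = (x^2 - z) y is a power series in x whose coefficients
  are polynomials in z bounded by (1 + |z|)^k / (k div 2)!. Hence Theta is holomorphic in z on
  Re z > 0, and Cauchy's estimates bound its z-derivatives near 2n + 1 by a bound for Theta itself
  on the unit disc about 2n + 1; in w, Theta is affine because the initial data are.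
  The bound for Theta comes from |y x| + |y' x| <= C (1 + |x|) e^(x^2/2), uniform for Re z >= 0 and
  bounded |z|: on a compact x-range this is an energy (Gronwall) estimate, and beyond it the
  Lyapunov function |G|^2 + |x G' + (1 + z) G / 2|^2 of G = e^(-x^2/2) y is nonincreasing.
  This gives the estimates even with M in place of M^(n+1).\<close>

section \<open>Solutions of the Weber equation\<close>

definition is_weber_sol :: "complex \<Rightarrow> (real \<Rightarrow> complex) \<Rightarrow> (real \<Rightarrow> complex) \<Rightarrow> bool" where
  "is_weber_sol z y y' \<longleftrightarrow>
     (\<forall>x. (y has_vector_derivative y' x) (at x)) \<and>
     (\<forall>x. (y' has_vector_derivative (complex_of_real (x\<^sup>2) - z) * y x) (at x))"

lemma is_weber_sol_lincomb:
  assumes "is_weber_sol z y1 y1'" and "is_weber_sol z y2 y2'"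
  shows "is_weber_sol z (\<lambda>x. a * y1 x + b * y2 x) (\<lambda>x. a * y1' x + b * y2' x)"
  unfolding is_weber_sol_def
proof (intro conjI allI)
  fix x
  show "((\<lambda>x. a * y1 x + b * y2 x) has_vector_derivative a * y1' x + b * y2' x) (at x)"
    using assms unfolding is_weber_sol_def
    by (intro has_vector_derivative_add has_vector_derivative_mult_right) auto
  define q where "q = complex_of_real (x\<^sup>2) - z"
  have "((\<lambda>x. a * y1' x + b * y2' x) has_vector_derivative a * (q * y1 x) + b * (q * y2 x)) (at x)"
    using assms unfolding is_weber_sol_def q_def
    by (intro has_vector_derivative_add has_vector_derivative_mult_right) auto
  then show "((\<lambda>x. a * y1' x + b * y2' x) has_vector_derivative q * (a * y1 x + b * y2 x)) (at x)"
    by (simp add: algebra_simps)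
qed

lemma is_weber_sol_reflect:
  assumes "is_weber_sol z y y'"
  shows "is_weber_sol z (\<lambda>x. y (- x)) (\<lambda>x. - y' (- x))"
  unfolding is_weber_sol_def
proof (intro conjI allI)
  fix x :: real
  have neg: "(uminus has_vector_derivative - 1) (at x)"
    by (auto intro!: derivative_eq_intros)
  have "((y \<circ> uminus) has_vector_derivative (- 1) *\<^sub>R y' (- x)) (at x)"
    using assms unfolding is_weber_sol_def by (intro vector_diff_chain_at[OF neg]) blast
  then show "((\<lambda>x. y (- x)) has_vector_derivative - y' (- x)) (at x)"
    by (simp add: o_def)
  have "((y' \<circ> uminus) has_vector_derivative
      (- 1) *\<^sub>R ((complex_of_real ((- x)\<^sup>2) - z) * y (- x))) (at x)"
    using assms unfolding is_weber_sol_def by (intro vector_diff_chain_at[OF neg]) blast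
  from has_vector_derivative_minus[OF this]
  show "((\<lambda>x. - y' (- x)) has_vector_derivative (complex_of_real (x\<^sup>2) - z) * y (- x)) (at x)"
    by (simp add: o_def)
qed

lemma has_real_derivative_norm_power2:
  fixes f :: "real \<Rightarrow> 'a::real_inner"
  assumes "(f has_vector_derivative f') (at t)"
  shows "((\<lambda>t. (norm (f t))\<^sup>2) has_real_derivative 2 * inner (f t) f') (at t)"
  using bounded_bilinear.has_vector_derivative[OF bounded_bilinear_inner assms assms]
  unfolding power2_norm_eq_inner has_real_derivative_iff_has_vector_derivative
  by (simp add: inner_commute)

lemma gronwall_exp_bound:
  fixes E E' :: "real \<Rightarrow> real"
  assumes "0 \<le> X"
    and "\<And>t. 0 \<le> t \<Longrightarrow> t \<le> X \<Longrightarrow> (E has_real_derivative E' t) (at t)"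
    and "\<And>t. 0 \<le> t \<Longrightarrow> t \<le> X \<Longrightarrow> E' t \<le> K * E t"
  shows "E X \<le> E 0 * exp (K * X)"
proof -
  have "exp (- K * X) * E X \<le> exp (- K * 0) * E 0"
  proof (rule DERIV_nonpos_imp_nonincreasing[OF \<open>0 \<le> X\<close>])
    fix t assume t: "0 \<le> t" "t \<le> X"
    have "((\<lambda>t. exp (- K * t) * E t) has_real_derivative
        exp (- K * t) * (E' t - K * E t)) (at t)"
      using assms(2)[OF t] by (auto intro!: derivative_eq_intros simp: algebra_simps)
    moreover have "exp (- K * t) * (E' t - K * E t) \<le> 0"
      using assms(3)[OF t] by (simp add: mult_nonneg_nonpos)
    ultimately show "\<exists>y. ((\<lambda>t. exp (- K * t) * E t) has_real_derivative y) (at t) \<and> y \<le> 0"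
      by blast
  qed
  then show ?thesis by (simp add: exp_minus field_simps)
qed

lemma energy_rate_le:
  fixes u v q :: complex
  shows "2 * inner u v + 2 * inner v (q * u) \<le> (1 + norm q) * ((norm u)\<^sup>2 + (norm v)\<^sup>2)"
proof -
  have "2 * inner u v \<le> 2 * (norm u * norm v)"
    and "2 * inner v (q * u) \<le> norm q * (2 * (norm u * norm v))"
    using norm_cauchy_schwarz[of u v] norm_cauchy_schwarz[of v "q * u"]
    by (simp_all add: norm_mult mult_ac)
  moreover have amgm: "2 * (norm u * norm v) \<le> (norm u)\<^sup>2 + (norm v)\<^sup>2"
    using sum_squares_bound[of "norm u" "norm v"] by (simp add: mult_ac)
  moreover have "norm q * (2 * (norm u * norm v)) \<le> norm q * ((norm u)\<^sup>2 + (norm v)\<^sup>2)"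
    using amgm by (intro mult_left_mono) auto
  ultimately show ?thesis
    by (simp add: algebra_simps)
qed

lemma weber_energy_bound:
  assumes sol: "is_weber_sol z y y'" and "0 \<le> x"
  shows "(norm (y x))\<^sup>2 + (norm (y' x))\<^sup>2
    \<le> ((norm (y 0))\<^sup>2 + (norm (y' 0))\<^sup>2) * exp ((1 + x\<^sup>2 + norm z) * x)"
proof (rule gronwall_exp_bound[OF \<open>0 \<le> x\<close>])
  fix t assume t: "0 \<le> t" "t \<le> x"
  define q where "q = complex_of_real (t\<^sup>2) - z"
  show "((\<lambda>t. (norm (y t))\<^sup>2 + (norm (y' t))\<^sup>2) has_real_derivative
      2 * inner (y t) (y' t) + 2 * inner (y' t) (q * y t)) (at t)"
    using sol unfolding is_weber_sol_def q_def
    by (intro DERIV_add has_real_derivative_norm_power2) auto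
  have "norm q \<le> t\<^sup>2 + norm z"
    using norm_triangle_ineq4[of "complex_of_real (t\<^sup>2)" z] unfolding q_def norm_of_real by simp
  also have "t\<^sup>2 \<le> x\<^sup>2"
    using t by (intro power_mono) auto
  finally have "1 + norm q \<le> 1 + x\<^sup>2 + norm z" by simp
  with energy_rate_le[of "y t" "y' t" q]
  show "2 * inner (y t) (y' t) + 2 * inner (y' t) (q * y t)
      \<le> (1 + x\<^sup>2 + norm z) * ((norm (y t))\<^sup>2 + (norm (y' t))\<^sup>2)"
    by (meson add_nonneg_nonneg mult_right_mono order_trans zero_le_power2)
qed

lemma weber_sol_zero:
  assumes "is_weber_sol z y y'" and "y 0 = 0" and "y' 0 = 0"
  shows "y x = 0 \<and> y' x = 0"
proof -
  have nonneg: "y x = 0 \<and> y' x = 0"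
    if "is_weber_sol z y y'" "y 0 = 0" "y' 0 = 0" "0 \<le> x" for y y' x
  proof -
    have "(norm (y x))\<^sup>2 + (norm (y' x))\<^sup>2 \<le> 0"
      using weber_energy_bound[OF that(1,4)] that(2,3) by simp
    then show ?thesis by (simp add: sum_power2_le_zero_iff)
  qed
  show ?thesis
  proof (cases "0 \<le> x")
    case False
    have "y (- (- x)) = 0 \<and> - y' (- (- x)) = 0"
      using nonneg[OF is_weber_sol_reflect[OF assms(1)], of "- x"] assms(2,3) False by simp
    then show ?thesis by simp
  qed (use nonneg assms in blast)
qed

lemma ode_sol_eqI:
  assumes "is_weber_sol z y y'"
  shows "ode_sol z (y 0) (y' 0) = (y, y')"
  unfolding ode_sol_def
proof (rule the_equality)
  show "fst (y, y') 0 = y 0 \<and> snd (y, y') 0 = y' 0 \<and>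
      (\<forall>x. (fst (y, y') has_vector_derivative snd (y, y') x) (at x)) \<and>
      (\<forall>x. (snd (y, y') has_vector_derivative (complex_of_real (x\<^sup>2) - z) * fst (y, y') x) (at x))"
    using assms unfolding is_weber_sol_def by simp
next
  fix p :: "(real \<Rightarrow> complex) \<times> (real \<Rightarrow> complex)"
  assume p: "fst p 0 = y 0 \<and> snd p 0 = y' 0 \<and>
      (\<forall>x. (fst p has_vector_derivative snd p x) (at x)) \<and>
      (\<forall>x. (snd p has_vector_derivative (complex_of_real (x\<^sup>2) - z) * fst p x) (at x))"
  then have "is_weber_sol z (fst p) (snd p)"
    unfolding is_weber_sol_def by blast
  from is_weber_sol_lincomb[OF this assms, of 1 "- 1"]
  have "is_weber_sol z (\<lambda>x. fst p x - y x) (\<lambda>x. snd p x - y' x)"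
    by simp
  from weber_sol_zero[OF this] p have "fst p x = y x \<and> snd p x = y' x" for x
    by simp
  then show "p = (y, y')"
    by (simp add: prod_eq_iff fun_eq_iff)
qed

section \<open>Growth of solutions\<close>

definition is_hermite_sol :: "complex \<Rightarrow> (real \<Rightarrow> complex) \<Rightarrow> (real \<Rightarrow> complex) \<Rightarrow> bool" where
  "is_hermite_sol c G G' \<longleftrightarrow>
     (\<forall>x. (G has_vector_derivative G' x) (at x)) \<and>
     (\<forall>x. (G' has_vector_derivative - (2 * of_real x * G' x + c * G x)) (at x))"

lemma is_hermite_sol_gauss_damped:
  assumes "is_weber_sol z y y'"
  shows "is_hermite_sol (1 + z) (\<lambda>x. of_real (exp (- x\<^sup>2 / 2)) * y x)
    (\<lambda>x. of_real (exp (- x\<^sup>2 / 2)) * (y' x - of_real x * y x))"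
  unfolding is_hermite_sol_def
proof (intro conjI allI)
  fix x :: real
  have y: "(y has_vector_derivative y' x) (at x)"
    and y': "(y' has_vector_derivative (complex_of_real (x\<^sup>2) - z) * y x) (at x)"
    using assms unfolding is_weber_sol_def by blast+
  have e: "((\<lambda>x. complex_of_real (exp (- x\<^sup>2 / 2))) has_vector_derivative
      - of_real x * of_real (exp (- x\<^sup>2 / 2))) (at x)"
    by (auto intro!: derivative_eq_intros simp: power2_eq_square algebra_simps)
  show "((\<lambda>x. of_real (exp (- x\<^sup>2 / 2)) * y x) has_vector_derivative
      of_real (exp (- x\<^sup>2 / 2)) * (y' x - of_real x * y x)) (at x)"
    using has_vector_derivative_mult[OF e y] by (simp add: algebra_simps)
  have "((\<lambda>x. y' x - of_real x * y x) has_vector_derivative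
      (complex_of_real (x\<^sup>2) - z) * y x - (of_real x * y' x + y x)) (at x)"
    using y y' by (auto intro!: derivative_eq_intros)
  from has_vector_derivative_mult[OF e this]
  show "((\<lambda>x. of_real (exp (- x\<^sup>2 / 2)) * (y' x - of_real x * y x)) has_vector_derivative
      - (2 * of_real x * (of_real (exp (- x\<^sup>2 / 2)) * (y' x - of_real x * y x)) +
         (1 + z) * (of_real (exp (- x\<^sup>2 / 2)) * y x))) (at x)"
    by (simp add: algebra_simps power2_eq_square)
qed

lemma inner_mult_self: "inner u (a * u) = Re a * (norm u)\<^sup>2" for u a :: complex
  unfolding inner_complex_def cmod_power2 by (simp add: algebra_simps power2_eq_square)

text \<open>With W = x G' + c G / 2 one has W' = (1 + c / 2) G' - 2 x W, so in the derivative of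
  |G|^2 + |W|^2 the term -4 x |W|^2 dominates for large x, while Re c >= 1 absorbs the terms
  in G.\<close>

lemma lyapunov_quadratic_le:
  fixes a b Cc x :: real
  assumes "1 \<le> Cc" and x: "3 + Cc + Cc\<^sup>2 \<le> x"
  shows "2 * a * b - a\<^sup>2 + (2 * (1 + Cc / 2) * b\<^sup>2 + (1 + Cc / 2) * Cc * a * b) \<le> 4 * x\<^sup>2 * b\<^sup>2"
proof -
  define A B where "A = 1 + Cc / 2" and "B = 2 + Cc + Cc * Cc / 2"
  have "0 \<le> Cc * Cc" "3 + Cc + Cc * Cc \<le> x"
    using x by (simp_all add: power2_eq_square)
  then have "0 \<le> B" "B \<le> x" "A \<le> x" "1 \<le> x"
    using \<open>1 \<le> Cc\<close> unfolding A_def B_def by linarith+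
  then have "B\<^sup>2 \<le> x\<^sup>2" "x \<le> x\<^sup>2"
    using power_mono[of B x 2] by (simp_all add: power2_eq_square)
  then have "B\<^sup>2 / 4 + 2 * A \<le> 4 * x\<^sup>2"
    using \<open>A \<le> x\<close> zero_le_power2[of x] by linarith
  moreover have "- a\<^sup>2 + B * a * b \<le> B\<^sup>2 / 4 * b\<^sup>2"
    using zero_le_power2[of "a - B * b / 2"] by (simp add: power2_eq_square algebra_simps)
  ultimately show ?thesis
    using mult_right_mono[of "B\<^sup>2 / 4 + 2 * A" "4 * x\<^sup>2" "b\<^sup>2"]
    unfolding A_def B_def by (simp add: algebra_simps)
qed

lemma lyapunov_form_le:
  fixes G W c :: complex and x Cc :: real
  assumes c1: "1 \<le> Re c" and cC: "norm c \<le> Cc" and x: "3 + Cc + Cc\<^sup>2 \<le> x"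
  shows "2 * inner G (W - c / 2 * G) + 2 * inner W ((1 + c / 2) * (W - c / 2 * G))
    \<le> 4 * x\<^sup>2 * (norm W)\<^sup>2"
proof -
  define a b where "a = norm G" and "b = norm W"
  have ab: "0 \<le> a" "0 \<le> b" unfolding a_def b_def by auto
  have C1: "1 \<le> Cc" using c1 cC complex_Re_le_cmod[of c] by linarith
  have "inner G W \<le> a * b"
    using norm_cauchy_schwarz[of G W] unfolding a_def b_def .
  moreover have "1 / 2 * a\<^sup>2 \<le> Re (c / 2) * a\<^sup>2"
    using c1 by (intro mult_right_mono) auto
  ultimately have t1: "2 * inner G (W - c / 2 * G) \<le> 2 * a * b - a\<^sup>2"
    unfolding inner_diff_right inner_mult_self a_def by simp
  have "norm (1 + c / 2) \<le> 1 + Cc / 2"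
    using norm_triangle_ineq[of 1 "c / 2"] cC by (simp add: norm_divide)
  moreover have "norm (W - c / 2 * G) \<le> b + Cc / 2 * a"
    using norm_triangle_ineq4[of W "c / 2 * G"] mult_right_mono[OF cC ab(1)]
    unfolding a_def b_def by (simp add: norm_mult)
  ultimately have "b * norm ((1 + c / 2) * (W - c / 2 * G)) \<le> b * ((1 + Cc / 2) * (b + Cc / 2 * a))"
    unfolding norm_mult using ab C1 by (intro mult_left_mono mult_mono) auto
  then have "inner W ((1 + c / 2) * (W - c / 2 * G)) \<le> b * ((1 + Cc / 2) * (b + Cc / 2 * a))"
    using norm_cauchy_schwarz[of W "(1 + c / 2) * (W - c / 2 * G)"] unfolding b_def by linarith
  then have "2 * inner W ((1 + c / 2) * (W - c / 2 * G)) \<le> 2 * (b * ((1 + Cc / 2) * (b + Cc / 2 * a)))"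
    by simp
  also have "\<dots> = 2 * (1 + Cc / 2) * b\<^sup>2 + (1 + Cc / 2) * Cc * a * b"
    by (simp add: algebra_simps power2_eq_square)
  finally have "2 * inner W ((1 + c / 2) * (W - c / 2 * G))
      \<le> 2 * (1 + Cc / 2) * b\<^sup>2 + (1 + Cc / 2) * Cc * a * b" .
  with t1 lyapunov_quadratic_le[OF C1 x, of a b] show ?thesis
    unfolding b_def by linarith
qed

lemma lyapunov_rate_eq:
  fixes G G' c :: complex and t :: real
  defines "W \<equiv> of_real t * G' + c / 2 * G"
  shows "t * (2 * inner G G' + 2 * inner W ((1 + c / 2) * G' - 2 * of_real t * W))
    = 2 * inner G (W - c / 2 * G) + 2 * inner W ((1 + c / 2) * (W - c / 2 * G)) - 4 * t\<^sup>2 * (norm W)\<^sup>2"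
proof -
  have V: "of_real t * G' = W - c / 2 * G"
    by (simp add: W_def)
  have i1: "t * inner G G' = inner G (W - c / 2 * G)"
    using inner_mult_right[of G t G'] V by simp
  have e: "of_real t * ((1 + c / 2) * G') = (1 + c / 2) * (W - c / 2 * G)"
    unfolding V[symmetric] by (rule mult.left_commute)
  have i2: "t * inner W ((1 + c / 2) * G') = inner W ((1 + c / 2) * (W - c / 2 * G))"
    using inner_mult_right[of W t "(1 + c / 2) * G'"] unfolding e by (rule sym)
  have i3: "inner W (2 * of_real t * W) = 2 * t * (norm W)\<^sup>2"
    using inner_mult_self[of W "2 * of_real t"] by simp
  have "t * (2 * inner G G' + 2 * inner W ((1 + c / 2) * G' - 2 * of_real t * W))
      = 2 * (t * inner G G') + 2 * (t * inner W ((1 + c / 2) * G'))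
        - 2 * t * inner W (2 * of_real t * W)"
    by (simp add: inner_diff_right algebra_simps)
  then show ?thesis
    unfolding i1 i2 i3 by (simp add: power2_eq_square)
qed

lemma has_real_derivative_hermite_lyapunov:
  assumes "is_hermite_sol c G G'"
  defines "W \<equiv> \<lambda>t. of_real t * G' t + c / 2 * G t"
  shows "((\<lambda>t. (norm (G t))\<^sup>2 + (norm (W t))\<^sup>2) has_real_derivative
    2 * inner (G t) (G' t) + 2 * inner (W t) ((1 + c / 2) * G' t - 2 * of_real t * W t)) (at t)"
proof -
  have G: "(G has_vector_derivative G' t) (at t)"
    and G': "(G' has_vector_derivative - (2 * of_real t * G' t + c * G t)) (at t)"
    using assms unfolding is_hermite_sol_def by blast+
  have "(W has_vector_derivative
      of_real t * - (2 * of_real t * G' t + c * G t) + 1 * G' t + c / 2 * G' t) (at t)"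
    unfolding W_def
    by (intro has_vector_derivative_add has_vector_derivative_mult G G'
        has_vector_derivative_mult_right) (auto intro!: derivative_eq_intros)
  then have "(W has_vector_derivative (1 + c / 2) * G' t - 2 * of_real t * W t) (at t)"
    by (simp add: W_def algebra_simps)
  with G show ?thesis
    by (intro DERIV_add has_real_derivative_norm_power2)
qed

lemma hermite_lyapunov_antimono:
  assumes sol: "is_hermite_sol c G G'" and c1: "1 \<le> Re c" and cC: "norm c \<le> Cc"
    and x0: "3 + Cc + Cc\<^sup>2 \<le> x0" and "x0 \<le> x"
  shows "(norm (G x))\<^sup>2 + (norm (of_real x * G' x + c / 2 * G x))\<^sup>2
    \<le> (norm (G x0))\<^sup>2 + (norm (of_real x0 * G' x0 + c / 2 * G x0))\<^sup>2"
proof (rule DERIV_nonpos_imp_nonincreasing[OF \<open>x0 \<le> x\<close>])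
  fix t assume t: "x0 \<le> t" "t \<le> x"
  define W where "W = of_real t * G' t + c / 2 * G t"
  define D where "D = 2 * inner (G t) (G' t) + 2 * inner W ((1 + c / 2) * G' t - 2 * of_real t * W)"
  have "0 \<le> Cc" using cC norm_ge_zero order_trans by blast
  then have "0 < t" using t x0 zero_le_power2[of Cc] by linarith
  have "t * D \<le> 0"
    using lyapunov_rate_eq[where G = "G t" and G' = "G' t" and c = c and t = t] lyapunov_form_le[OF c1 cC, of t "G t" W] x0 t
    unfolding D_def W_def by simp
  then have "D \<le> 0"
    using \<open>0 < t\<close> by (simp add: mult_le_0_iff)
  with has_real_derivative_hermite_lyapunov[OF sol, of t]
  show "\<exists>D. ((\<lambda>t. (norm (G t))\<^sup>2 + (norm (of_real t * G' t + c / 2 * G t))\<^sup>2)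
      has_real_derivative D) (at t) \<and> D \<le> 0"
    unfolding D_def W_def by blast
qed

lemma norm_add_le_sqrt_mult:
  fixes u v u0 v0 :: "'a::real_normed_vector"
  assumes "(norm u)\<^sup>2 + (norm v)\<^sup>2 \<le> K * ((norm u0)\<^sup>2 + (norm v0)\<^sup>2)" and "0 \<le> K"
  shows "norm u + norm v \<le> sqrt (2 * K) * (norm u0 + norm v0)"
proof (rule power2_le_imp_le)
  have "(norm u + norm v)\<^sup>2 \<le> 2 * ((norm u)\<^sup>2 + (norm v)\<^sup>2)"
    using sum_squares_bound[of "norm u" "norm v"] by (simp add: power2_sum)
  also have "\<dots> \<le> 2 * K * ((norm u0)\<^sup>2 + (norm v0)\<^sup>2)"
    using assms(1) by simp
  also have "\<dots> \<le> 2 * K * (norm u0 + norm v0)\<^sup>2"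
    using \<open>0 \<le> K\<close> by (intro mult_left_mono) (auto simp: power2_sum)
  also have "\<dots> = (sqrt (2 * K) * (norm u0 + norm v0))\<^sup>2"
    using \<open>0 \<le> K\<close> by (simp add: power_mult_distrib)
  finally show "(norm u + norm v)\<^sup>2 \<le> (sqrt (2 * K) * (norm u0 + norm v0))\<^sup>2" .
qed (use \<open>0 \<le> K\<close> in simp)

lemma norm_lyapunov_coord_le:
  fixes u v c :: complex
  assumes "0 \<le> t" and "norm c \<le> Cc"
  shows "norm u + norm (of_real t * (v - of_real t * u) + c / 2 * u)
    \<le> (1 + t + t\<^sup>2 + Cc) * (norm u + norm v)"
proof -
  have "norm (of_real t * (v - of_real t * u)) \<le> t * (norm v + t * norm u)"
    using norm_triangle_ineq4[of v "of_real t * u"] assms(1)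
    by (simp add: norm_mult mult_left_mono)
  moreover have "norm (c / 2 * u) \<le> Cc / 2 * norm u"
    using mult_right_mono[OF assms(2), of "norm u"] by (simp add: norm_mult norm_divide)
  ultimately have "norm (of_real t * (v - of_real t * u) + c / 2 * u)
      \<le> t * norm v + t\<^sup>2 * norm u + Cc / 2 * norm u"
    using norm_triangle_ineq[of "of_real t * (v - of_real t * u)" "c / 2 * u"]
    by (simp add: algebra_simps power2_eq_square)
  moreover have "0 \<le> Cc"
    using assms(2) norm_ge_zero order_trans by blast
  then have "0 \<le> t * norm u" "0 \<le> Cc * norm u" "0 \<le> t\<^sup>2 * norm v" "0 \<le> Cc * norm v"
    using assms(1) by auto
  moreover have "(1 + t + t\<^sup>2 + Cc) * (norm u + norm v) = norm u + norm v + t * norm u + t * norm v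
      + t\<^sup>2 * norm u + t\<^sup>2 * norm v + Cc * norm u + Cc * norm v"
    by (simp add: algebra_simps)
  moreover have "Cc / 2 * norm u = Cc * norm u / 2"
    by simp
  ultimately show ?thesis
    using norm_ge_zero[of v] by linarith
qed

lemma norm_le_lyapunov_coord:
  fixes u v c :: complex
  assumes t: "1 \<le> t" and cC: "norm c \<le> Cc"
  shows "norm u + norm v
    \<le> (1 + Cc) * (1 + t) * (norm u + norm (of_real t * (v - of_real t * u) + c / 2 * u))"
proof -
  define w where "w = of_real t * (v - of_real t * u) + c / 2 * u"
  define X where "X = norm w + Cc / 2 * norm u"
  have "0 \<le> Cc" using cC norm_ge_zero order_trans by blast
  then have X0: "0 \<le> X" unfolding X_def by simp
  have "of_real t * v = of_real t * (of_real t * u) + (w - c / 2 * u)"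
    by (simp add: w_def algebra_simps)
  then have "t * norm v = norm (of_real t * (of_real t * u) + (w - c / 2 * u))"
    using t by (metis abs_of_nonneg norm_mult norm_of_real dual_order.trans zero_le_one)
  also have "\<dots> \<le> t * (t * norm u) + norm (w - c / 2 * u)"
    using norm_triangle_ineq[of "of_real t * (of_real t * u)" "w - c / 2 * u"] t
    by (simp add: norm_mult)
  also have "norm (w - c / 2 * u) \<le> X"
    using norm_triangle_ineq4[of w "c / 2 * u"] mult_right_mono[OF cC, of "norm u"]
    unfolding X_def by (simp add: norm_mult norm_divide)
  also have "X \<le> t * X"
    using t X0 by (simp add: mult_le_cancel_right1)
  finally have "t * (norm v - t * norm u - X) \<le> 0"
    by (simp add: algebra_simps)
  then have v: "norm v \<le> t * norm u + X"
    using t by (simp add: mult_le_0_iff)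
  have "norm u + norm v \<le> (1 + t + Cc / 2) * norm u + norm w"
    using v unfolding X_def by (simp add: algebra_simps)
  also have "\<dots> \<le> (1 + Cc) * (1 + t) * norm u + (1 + Cc) * (1 + t) * norm w"
  proof (intro add_mono mult_right_mono)
    show "1 + t + Cc / 2 \<le> (1 + Cc) * (1 + t)" "norm w \<le> (1 + Cc) * (1 + t) * norm w"
      using t \<open>0 \<le> Cc\<close> mult_left_le_one_le[of "norm w" "1 / ((1 + Cc) * (1 + t))"]
      by (auto simp: algebra_simps intro!: mult_nonneg_nonneg)
  qed simp
  finally show ?thesis
    unfolding w_def by (simp add: algebra_simps)
qed

lemma weber_norm_bound:
  assumes "is_weber_sol z y y'" and "0 \<le> x"
  shows "norm (y x) + norm (y' x)
    \<le> sqrt (2 * exp ((1 + x\<^sup>2 + norm z) * x)) * (norm (y 0) + norm (y' 0))"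
  by (rule norm_add_le_sqrt_mult) (use weber_energy_bound[OF assms] in \<open>simp_all add: mult.commute\<close>)

lemma weber_sol_far_bound:
  assumes sol: "is_weber_sol z y y'" and z: "0 \<le> Re z" and cC: "norm (1 + z) \<le> Cc"
    and x0: "3 + Cc + Cc\<^sup>2 \<le> x0" and "x0 \<le> x"
  shows "norm (y x) + norm (y' x)
    \<le> 2 * (1 + Cc) * (1 + x0 + x0\<^sup>2 + Cc) * (norm (y x0) + norm (y' x0)) * (1 + x) * exp (x\<^sup>2 / 2)"
proof -
  define e :: "real \<Rightarrow> real" where "e t = exp (- t\<^sup>2 / 2)" for t
  define L where "L t = of_real t * (y' t - of_real t * y t) + (1 + z) / 2 * y t" for t
  have "0 \<le> Cc" using cC norm_ge_zero order_trans by blast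
  then have "1 \<le> x0" using x0 zero_le_power2[of Cc] by linarith
  have GW: "norm (of_real (e t) * y t)
      + norm (of_real t * (of_real (e t) * (y' t - of_real t * y t)) + (1 + z) / 2 * (of_real (e t) * y t))
      = e t * (norm (y t) + norm (L t))" for t
  proof -
    have "of_real t * (of_real (e t) * (y' t - of_real t * y t)) + (1 + z) / 2 * (of_real (e t) * y t)
        = of_real (e t) * L t"
      by (simp add: L_def algebra_simps)
    then show ?thesis by (simp add: norm_mult e_def distrib_left)
  qed
  have "e x * (norm (y x) + norm (L x)) \<le> sqrt (2 * 1) * (e x0 * (norm (y x0) + norm (L x0)))"
    unfolding GW[symmetric]
    by (rule norm_add_le_sqrt_mult)
       (use hermite_lyapunov_antimono[OF is_hermite_sol_gauss_damped[OF sol] _ cC x0 \<open>x0 \<le> x\<close>] z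
        in \<open>simp_all add: e_def\<close>)
  also have "\<dots> \<le> 2 * (norm (y x0) + norm (L x0))"
    using sqrt2_less_2 by (intro mult_mono mult_left_le_one_le) (auto simp: e_def)
  also have "\<dots> \<le> 2 * ((1 + x0 + x0\<^sup>2 + Cc) * (norm (y x0) + norm (y' x0)))"
    using norm_lyapunov_coord_le[OF _ cC, of x0 "y x0" "y' x0"] \<open>1 \<le> x0\<close> unfolding L_def by simp
  finally have L: "norm (y x) + norm (L x)
      \<le> 2 * (1 + x0 + x0\<^sup>2 + Cc) * (norm (y x0) + norm (y' x0)) * exp (x\<^sup>2 / 2)"
    by (simp add: e_def exp_minus field_simps)
  have "norm (y x) + norm (y' x) \<le> (1 + Cc) * (1 + x) * (norm (y x) + norm (L x))"
    using norm_le_lyapunov_coord[OF _ cC, of x "y x" "y' x"] \<open>1 \<le> x0\<close> \<open>x0 \<le> x\<close>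
    unfolding L_def by simp
  also have "\<dots> \<le> (1 + Cc) * (1 + x)
      * (2 * (1 + x0 + x0\<^sup>2 + Cc) * (norm (y x0) + norm (y' x0)) * exp (x\<^sup>2 / 2))"
    using L \<open>0 \<le> Cc\<close> \<open>1 \<le> x0\<close> \<open>x0 \<le> x\<close> by (intro mult_left_mono) auto
  finally show ?thesis
    by (simp only: mult_ac)
qed

lemma weber_sol_near_bound:
  assumes sol: "is_weber_sol z y y'" and "norm z \<le> Z" and "norm (y 0) \<le> 1" and "norm (y' 0) \<le> 1"
    and "0 \<le> x" and "x \<le> x0"
  shows "norm (y x) + norm (y' x) \<le> 2 * sqrt (2 * exp ((1 + x0\<^sup>2 + Z) * x0))"
proof -
  have "0 \<le> Z"
    using assms(2) norm_ge_zero order_trans by blast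
  then have "(1 + x\<^sup>2 + norm z) * x \<le> (1 + x0\<^sup>2 + Z) * x0"
    using assms by (intro mult_mono add_mono power_mono) auto
  then have "sqrt (2 * exp ((1 + x\<^sup>2 + norm z) * x)) * (norm (y 0) + norm (y' 0))
      \<le> sqrt (2 * exp ((1 + x0\<^sup>2 + Z) * x0)) * 2"
    using assms by (intro mult_mono) auto
  with weber_norm_bound[OF sol \<open>0 \<le> x\<close>] show ?thesis
    by simp
qed

lemma weber_sol_growth_nonneg:
  fixes Z :: real
  obtains C where "0 < C"
    and "\<And>z y y' x. is_weber_sol z y y' \<Longrightarrow> 0 \<le> Re z \<Longrightarrow> norm z \<le> Z \<Longrightarrow>
      norm (y 0) \<le> 1 \<Longrightarrow> norm (y' 0) \<le> 1 \<Longrightarrow> 0 \<le> x \<Longrightarrow>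
      norm (y x) + norm (y' x) \<le> C * (1 + x) * exp (x\<^sup>2 / 2)"
proof -
  define Cc where "Cc = \<bar>Z\<bar> + 1"
  define x0 where "x0 = 3 + Cc + Cc\<^sup>2"
  define R where "R = 2 * sqrt (2 * exp ((1 + x0\<^sup>2 + Z) * x0))"
  define C where "C = 2 * (1 + Cc) * (1 + x0 + x0\<^sup>2 + Cc) * R"
  have "1 \<le> Cc" "1 \<le> x0" "0 < R"
    unfolding Cc_def x0_def R_def by (simp_all add: add_increasing)
  moreover have "1 * 1 \<le> 2 * (1 + Cc) * (1 + x0 + x0\<^sup>2 + Cc)"
    using \<open>1 \<le> Cc\<close> \<open>1 \<le> x0\<close> by (intro mult_mono) (auto simp: add_increasing)
  ultimately have "R \<le> C" "0 < C"
    unfolding C_def by (simp_all add: mult_le_cancel_right1)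
  show ?thesis
  proof (rule that[OF \<open>0 < C\<close>])
    fix z y y' and x :: real
    assume sol: "is_weber_sol z y y'" and z: "0 \<le> Re z" "norm z \<le> Z"
      and init: "norm (y 0) \<le> 1" "norm (y' 0) \<le> 1" and "0 \<le> x"
    note near = weber_sol_near_bound[OF sol z(2) init, of _ x0, folded R_def]
    show "norm (y x) + norm (y' x) \<le> C * (1 + x) * exp (x\<^sup>2 / 2)"
    proof (cases "x \<le> x0")
      case True
      have "1 * 1 \<le> (1 + x) * exp (x\<^sup>2 / 2)"
        using \<open>0 \<le> x\<close> by (intro mult_mono) auto
      then have "C \<le> C * ((1 + x) * exp (x\<^sup>2 / 2))"
        using \<open>0 < C\<close> by (simp add: mult_le_cancel_left1)
      then show ?thesis
        using near[OF \<open>0 \<le> x\<close> True] \<open>R \<le> C\<close> by (simp add: mult.assoc)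
    next
      case False
      have cC: "norm (1 + z) \<le> Cc"
        using norm_triangle_ineq[of 1 z] z unfolding Cc_def by simp
      have "norm (y x) + norm (y' x) \<le> 2 * (1 + Cc) * (1 + x0 + x0\<^sup>2 + Cc)
          * (norm (y x0) + norm (y' x0)) * (1 + x) * exp (x\<^sup>2 / 2)"
        by (rule weber_sol_far_bound[OF sol z(1) cC]) (use False in \<open>simp_all add: x0_def\<close>)
      also have "\<dots> \<le> C * (1 + x) * exp (x\<^sup>2 / 2)"
        unfolding C_def using near[of x0] \<open>1 \<le> Cc\<close> \<open>1 \<le> x0\<close> \<open>0 \<le> x\<close>
        by (intro mult_right_mono mult_left_mono) auto
      finally show ?thesis .
    qed
  qed
qed

lemma weber_sol_growth:
  fixes Z :: real
  obtains C where "0 < C"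
    and "\<And>z y y' x. is_weber_sol z y y' \<Longrightarrow> 0 \<le> Re z \<Longrightarrow> norm z \<le> Z \<Longrightarrow>
      norm (y 0) \<le> 1 \<Longrightarrow> norm (y' 0) \<le> 1 \<Longrightarrow>
      norm (y x) + norm (y' x) \<le> C * (1 + \<bar>x\<bar>) * exp (x\<^sup>2 / 2)"
proof -
  obtain C where "0 < C" and C: "\<And>z y y' x. is_weber_sol z y y' \<Longrightarrow> 0 \<le> Re z \<Longrightarrow> norm z \<le> Z \<Longrightarrow>
      norm (y 0) \<le> 1 \<Longrightarrow> norm (y' 0) \<le> 1 \<Longrightarrow> 0 \<le> x \<Longrightarrow>
      norm (y x) + norm (y' x) \<le> C * (1 + x) * exp (x\<^sup>2 / 2)"
    using weber_sol_growth_nonneg by blast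
  show ?thesis
  proof (rule that[OF \<open>0 < C\<close>])
    fix z y y' and x :: real
    assume sol: "is_weber_sol z y y'" and z: "0 \<le> Re z" "norm z \<le> Z"
      and init: "norm (y 0) \<le> 1" "norm (y' 0) \<le> 1"
    show "norm (y x) + norm (y' x) \<le> C * (1 + \<bar>x\<bar>) * exp (x\<^sup>2 / 2)"
    proof (cases "0 \<le> x")
      case True
      then show ?thesis using C[OF sol z init True] by simp
    next
      case False
      then show ?thesis using C[OF is_weber_sol_reflect[OF sol] z, of "- x"] init by simp
    qed
  qed
qed

section \<open>The power series solution\<close>

text \<open>Taylor coefficients at 0 of the solution with y 0 = a and y' 0 = b, obtained by comparing
  coefficients in y'' = (x^2 - z) y.\<close>

fun weber_coeff :: "complex \<Rightarrow> complex \<Rightarrow> complex \<Rightarrow> nat \<Rightarrow> complex" where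
  "weber_coeff z a b 0 = a"
| "weber_coeff z a b (Suc 0) = b"
| "weber_coeff z a b (Suc (Suc k)) =
     ((if k < 2 then 0 else weber_coeff z a b (k - 2)) - z * weber_coeff z a b k)
       / of_nat ((k + 2) * (k + 1))"

lemma norm_weber_coeff_Suc_Suc_le:
  fixes Q :: real
  assumes "norm (if j < 2 then 0 else weber_coeff z a b (j - 2)) \<le> real (j div 2) * Q"
    and "norm (z * weber_coeff z a b j) \<le> Q"
  shows "norm (weber_coeff z a b (Suc (Suc j))) \<le> Q / real (j div 2 + 1)"
proof -
  define m where "m = j div 2"
  define N where "N = (if j < 2 then 0 else weber_coeff z a b (j - 2)) - z * weber_coeff z a b j"
  have "0 \<le> Q" using assms(2) norm_ge_zero order_trans by blast
  have "norm N \<le> m * Q + Q"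
    unfolding N_def m_def using norm_triangle_ineq4 add_mono[OF assms] by (rule order_trans)
  then have N: "norm N \<le> (m + 1) * Q"
    by (simp add: algebra_simps)
  have den: "real (m + 1) * real (m + 1) \<le> real ((j + 2) * (j + 1))"
    unfolding of_nat_mult[symmetric] of_nat_le_iff m_def by (intro mult_le_mono) auto
  have "norm (weber_coeff z a b (Suc (Suc j))) = norm N / real ((j + 2) * (j + 1))"
    unfolding N_def by (simp only: weber_coeff.simps norm_divide norm_of_nat)
  also have "\<dots> \<le> (m + 1) * Q / (real (m + 1) * real (m + 1))"
    by (rule frac_le) (use N den \<open>0 \<le> Q\<close> in auto)
  also have "\<dots> = Q / (m + 1)"
    by (simp del: of_nat_add)
  finally show ?thesis
    unfolding m_def .
qed

lemma norm_weber_coeff_le: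
  assumes a: "norm a \<le> D" and b: "norm b \<le> D" and L: "1 + norm z \<le> L"
  shows "norm (weber_coeff z a b k) \<le> D * L ^ k / fact (k div 2)"
proof (induction k rule: less_induct)
  case (less k)
  have "0 \<le> D" using a norm_ge_zero order_trans by blast
  have "1 \<le> L" using L norm_ge_zero[of z] by linarith
  show ?case
  proof (cases "k < 2")
    case True
    moreover have "D \<le> D * L"
      using \<open>1 \<le> L\<close> \<open>0 \<le> D\<close> by (simp add: mult_le_cancel_left1)
    ultimately show ?thesis
      using a b by (auto simp: less_2_cases_iff)
  next
    case False
    then obtain j where k: "k = Suc (Suc j)"
      by (metis add_2_eq_Suc le_add_diff_inverse not_less)
    define m where "m = j div 2"
    define Q where "Q = D * L ^ (j + 2) / fact m"
    have "norm (if j < 2 then 0 else weber_coeff z a b (j - 2)) \<le> m * Q"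
    proof (cases "j < 2")
      case False
      then have "0 < m" "(j - 2) div 2 = m - 1" unfolding m_def by auto
      have "norm (weber_coeff z a b (j - 2)) \<le> D * L ^ (j - 2) / fact (m - 1)"
        using less[of "j - 2"] k \<open>(j - 2) div 2 = m - 1\<close> by simp
      also have "\<dots> \<le> D * L ^ (j + 2) / fact (m - 1)"
        using \<open>0 \<le> D\<close> \<open>1 \<le> L\<close>
        by (intro divide_right_mono mult_left_mono power_increasing) auto
      also have "\<dots> = m * Q"
        using \<open>0 < m\<close> fact_reduce[of m, where 'a=real] unfolding Q_def by (simp add: field_simps)
      finally show ?thesis using False by simp
    qed (use \<open>0 \<le> D\<close> \<open>1 \<le> L\<close> in \<open>simp add: Q_def\<close>)
    moreover have "norm (z * weber_coeff z a b j) \<le> L * (D * L ^ j / fact m)"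
      unfolding norm_mult m_def using less[of j] k L \<open>0 \<le> D\<close> \<open>1 \<le> L\<close>
      by (intro mult_mono) auto
    moreover have "\<dots> \<le> Q"
      unfolding Q_def using \<open>0 \<le> D\<close> \<open>1 \<le> L\<close>
      by (simp add: power_add power2_eq_square mult_ac divide_right_mono mult_left_mono)
    ultimately have "norm (weber_coeff z a b k) \<le> Q / (m + 1)"
      using norm_weber_coeff_Suc_Suc_le[of j z a b Q] unfolding k m_def by linarith
    also have "\<dots> = D * L ^ k / fact (k div 2)"
      using k unfolding Q_def m_def by (simp add: field_simps)
    finally show ?thesis .
  qed
qed

lemma summable_power_div_fact_half: "summable (\<lambda>k. r ^ k / fact (k div 2))" for r :: real
proof -
  have e: "(\<lambda>j. (r\<^sup>2) ^ j / fact j) sums exp (r\<^sup>2)"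
    using exp_converges[of "r\<^sup>2"] by (simp add: divide_inverse mult.commute)
  from sums_if[OF sums_mult[OF e, of r] e]
  have "summable (\<lambda>n. if even n then (r\<^sup>2) ^ (n div 2) / fact (n div 2)
      else r * ((r\<^sup>2) ^ ((n - 1) div 2) / fact ((n - 1) div 2)))"
    by (rule sums_summable)
  also have "(\<lambda>n. if even n then (r\<^sup>2) ^ (n div 2) / fact (n div 2)
      else r * ((r\<^sup>2) ^ ((n - 1) div 2) / fact ((n - 1) div 2))) = (\<lambda>k. r ^ k / fact (k div 2))"
  proof
    fix n :: nat
    show "(if even n then (r\<^sup>2) ^ (n div 2) / fact (n div 2)
        else r * ((r\<^sup>2) ^ ((n - 1) div 2) / fact ((n - 1) div 2))) = r ^ n / fact (n div 2)"
    proof (cases "even n")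
      case True
      then show ?thesis by (simp add: power_mult[symmetric])
    next
      case False
      then obtain j where "n = Suc (2 * j)" by (metis oddE Suc_eq_plus1)
      then show ?thesis by (simp add: power_mult[symmetric])
    qed
  qed
  finally show ?thesis .
qed

lemma summable_power_series_fact_half:
  fixes c :: "nat \<Rightarrow> complex"
  assumes "\<And>k. norm (c k) \<le> D * L ^ k / fact (k div 2)"
  shows "summable (\<lambda>k. c k * \<xi> ^ k)"
proof (rule summable_comparison_test'[where N = 0])
  show "summable (\<lambda>k. D * ((L * norm \<xi>) ^ k / fact (k div 2)))"
    by (intro summable_mult summable_power_div_fact_half)
  show "norm (c k * \<xi> ^ k) \<le> D * ((L * norm \<xi>) ^ k / fact (k div 2))" for k
    using mult_right_mono[OF assms[of k], of "norm \<xi> ^ k"]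
    by (simp add: norm_mult norm_power power_mult_distrib mult_ac)
qed

lemma norm_diffs_le:
  fixes c :: "nat \<Rightarrow> complex"
  assumes c: "\<And>k. norm (c k) \<le> D * L ^ k / fact (k div 2)" and "0 \<le> D" and "0 \<le> L"
  shows "norm (diffs c k) \<le> (D * L) * (2 * L) ^ k / fact (k div 2)"
proof -
  have "real (Suc k) \<le> 2 ^ k"
    using of_nat_mono[OF Suc_leI[OF less_exp[of k]]] by simp
  moreover have "(fact (k div 2) :: real) \<le> fact (Suc k div 2)"
    by (intro fact_mono div_le_mono) simp
  then have "D * L ^ Suc k / fact (Suc k div 2) \<le> D * L ^ Suc k / fact (k div 2)"
    using assms(2,3) by (intro divide_left_mono) auto
  ultimately have "real (Suc k) * norm (c (Suc k)) \<le> 2 ^ k * (D * L ^ Suc k / fact (k div 2))"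
    using c[of "Suc k"] assms(2,3) by (intro mult_mono) auto
  then show ?thesis
    unfolding diffs_def norm_mult norm_of_nat by (simp add: power_mult_distrib mult_ac)
qed

lemma holomorphic_on_UNIV_suminf:
  fixes f :: "nat \<Rightarrow> complex \<Rightarrow> complex"
  assumes hol: "\<And>k. f k holomorphic_on UNIV"
    and bound: "\<And>R. \<exists>m. summable m \<and> (\<forall>k z. norm z \<le> R \<longrightarrow> norm (f k z) \<le> m k)"
  shows "(\<lambda>z. \<Sum>k. f k z) holomorphic_on UNIV"
proof -
  have "\<exists>g g'. \<forall>z\<in>UNIV. ((\<lambda>k. f k z) sums g z) \<and> ((\<lambda>k. deriv (f k) z) sums g' z)
      \<and> (g has_field_derivative g' z) (at z)"
  proof (rule series_and_derivative_comparison_local)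
    show "(f k has_field_derivative deriv (f k) z) (at z)" for k z
      using holomorphic_derivI[OF hol] by blast
    fix z :: complex
    obtain m where "summable m" and m: "\<And>k w. norm w \<le> norm z + 1 \<Longrightarrow> norm (f k w) \<le> m k"
      using bound[of "norm z + 1"] by blast
    moreover have "norm w \<le> norm z + 1" if "w \<in> ball z 1" for w
      using that norm_triangle_sub[of w z] by (simp add: dist_norm norm_minus_commute)
    ultimately show "\<exists>d h. 0 < d \<and> summable h \<and>
        (\<forall>\<^sub>F k in sequentially. \<forall>w\<in>ball z d \<inter> UNIV. norm (f k w) \<le> h k)"
      by (intro exI[of _ 1] exI[of _ m]) auto
  qed simp
  then obtain g g' where "\<And>z. ((\<lambda>k. f k z) sums g z) \<and> (g has_field_derivative g' z) (at z)"
    by blast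
  then have "(\<lambda>z. \<Sum>k. f k z) = g" and "\<And>z. g field_differentiable at z"
    by (auto simp: sums_iff field_differentiable_def)
  then show ?thesis
    by (simp add: holomorphic_on_def field_differentiable_at_within)
qed

lemma holomorphic_power_series_param:
  fixes c :: "complex \<Rightarrow> nat \<Rightarrow> complex"
  assumes hol: "\<And>k. (\<lambda>z. c z k) holomorphic_on UNIV"
    and bound: "\<And>R. \<exists>D L. \<forall>z k. norm z \<le> R \<longrightarrow> norm (c z k) \<le> D * L ^ k / fact (k div 2)"
  shows "(\<lambda>z. \<Sum>k. c z k * \<xi> ^ k) holomorphic_on UNIV"
proof (rule holomorphic_on_UNIV_suminf)
  show "(\<lambda>z. c z k * \<xi> ^ k) holomorphic_on UNIV" for k
    using hol by (intro holomorphic_intros)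
  fix R
  obtain D L where DL: "\<And>z k. norm z \<le> R \<Longrightarrow> norm (c z k) \<le> D * L ^ k / fact (k div 2)"
    using bound by blast
  show "\<exists>m. summable m \<and> (\<forall>k z. norm z \<le> R \<longrightarrow> norm (c z k * \<xi> ^ k) \<le> m k)"
  proof (intro exI conjI allI impI)
    show "summable (\<lambda>k. D * ((L * norm \<xi>) ^ k / fact (k div 2)))"
      by (intro summable_mult summable_power_div_fact_half)
    show "norm (c z k * \<xi> ^ k) \<le> D * ((L * norm \<xi>) ^ k / fact (k div 2))" if "norm z \<le> R" for k z
      using mult_right_mono[OF DL[OF that, of k], of "norm \<xi> ^ k"]
      by (simp add: norm_mult norm_power power_mult_distrib mult_ac)
  qed
qed

lemma weber_coeff_holomorphic: "(\<lambda>z. weber_coeff z a b k) holomorphic_on UNIV"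
proof (induction k rule: less_induct)
  case (less k)
  show ?case
  proof (cases "k < 2")
    case True
    then show ?thesis by (auto simp: less_2_cases_iff)
  next
    case False
    then obtain j where k: "k = Suc (Suc j)"
      by (metis add_2_eq_Suc le_add_diff_inverse not_less)
    have "(\<lambda>z. (if j < 2 then 0 else weber_coeff z a b (j - 2)) - z * weber_coeff z a b j)
        holomorphic_on UNIV"
      using less k by (cases "j < 2") (auto intro!: holomorphic_intros)
    moreover have "(of_nat ((j + 2) * (j + 1)) :: complex) \<noteq> 0"
      by (simp only: of_nat_eq_0_iff) simp
    ultimately show ?thesis
      unfolding k weber_coeff.simps by (intro holomorphic_on_divide holomorphic_on_const)
  qed
qed

definition weber_series :: "complex \<Rightarrow> complex \<Rightarrow> complex \<Rightarrow> complex \<Rightarrow> complex" where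
  "weber_series z a b \<xi> = (\<Sum>k. weber_coeff z a b k * \<xi> ^ k)"

definition weber_series_deriv :: "complex \<Rightarrow> complex \<Rightarrow> complex \<Rightarrow> complex \<Rightarrow> complex" where
  "weber_series_deriv z a b \<xi> = (\<Sum>k. diffs (weber_coeff z a b) k * \<xi> ^ k)"

lemma summable_weber_series: "summable (\<lambda>k. weber_coeff z a b k * \<xi> ^ k)"
  by (rule summable_power_series_fact_half[OF norm_weber_coeff_le[of a "max (norm a) (norm b)" b z]]) auto

lemma has_field_derivative_weber_series:
  "(weber_series z a b has_field_derivative weber_series_deriv z a b \<xi>) (at \<xi>)"
  unfolding weber_series_def[abs_def] weber_series_deriv_def
  by (rule termdiffs_strong_converges_everywhere[OF summable_weber_series])

lemma diffs_diffs_weber_coeff: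
  "diffs (diffs (weber_coeff z a b)) k
    = (if k < 2 then 0 else weber_coeff z a b (k - 2)) - z * weber_coeff z a b k"
proof -
  have nz: "(of_nat ((k + 2) * (k + 1)) :: complex) \<noteq> 0"
    by (simp only: of_nat_eq_0_iff) simp
  have "diffs (diffs (weber_coeff z a b)) k
      = of_nat ((k + 2) * (k + 1)) * weber_coeff z a b (Suc (Suc k))"
    by (simp add: diffs_def algebra_simps del: weber_coeff.simps)
  also have "\<dots> = (if k < 2 then 0 else weber_coeff z a b (k - 2)) - z * weber_coeff z a b k"
    unfolding weber_coeff.simps by (simp only: times_divide_eq_right nonzero_mult_div_cancel_left[OF nz])
  finally show ?thesis .
qed

lemma has_field_derivative_weber_series_deriv:
  "(weber_series_deriv z a b has_field_derivative (\<xi>\<^sup>2 - z) * weber_series z a b \<xi>) (at \<xi>)"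
proof -
  let ?c = "weber_coeff z a b"
  have sums: "(\<lambda>k. ?c k * \<xi> ^ k) sums weber_series z a b \<xi>"
    unfolding weber_series_def using summable_weber_series by (rule summable_sums)
  have "(\<lambda>k. ?c k * \<xi> ^ k * \<xi>\<^sup>2) sums (weber_series z a b \<xi> * \<xi>\<^sup>2)"
    by (rule sums_mult2[OF sums])
  then have "(\<lambda>k. if k < 2 then 0 else ?c (k - 2) * \<xi> ^ k) sums (weber_series z a b \<xi> * \<xi>\<^sup>2)"
    by (subst sums_zero_iff_shift[of 2, symmetric]) (simp_all add: power_add power2_eq_square mult_ac)
  moreover have "(\<lambda>k. diffs (diffs ?c) k * \<xi> ^ k)
      = (\<lambda>k. (if k < 2 then 0 else ?c (k - 2) * \<xi> ^ k) - z * (?c k * \<xi> ^ k))"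
    by (rule ext) (simp add: diffs_diffs_weber_coeff algebra_simps)
  ultimately have "(\<lambda>k. diffs (diffs ?c) k * \<xi> ^ k)
      sums (weber_series z a b \<xi> * \<xi>\<^sup>2 - z * weber_series z a b \<xi>)"
    using sums_diff[OF _ sums_mult[OF sums, of z]] by simp
  then have "(\<Sum>k. diffs (diffs ?c) k * \<xi> ^ k) = (\<xi>\<^sup>2 - z) * weber_series z a b \<xi>"
    by (simp add: sums_iff algebra_simps)
  moreover have "(weber_series_deriv z a b has_field_derivative
      (\<Sum>k. diffs (diffs ?c) k * \<xi> ^ k)) (at \<xi>)"
    unfolding weber_series_deriv_def[abs_def]
    by (rule termdiffs_strong_converges_everywhere)
       (rule termdiff_converges_all[OF summable_weber_series])
  ultimately show ?thesis
    by simp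
qed

lemma is_weber_sol_weber_series:
  "is_weber_sol z (\<lambda>x. weber_series z a b (of_real x)) (\<lambda>x. weber_series_deriv z a b (of_real x))"
  unfolding is_weber_sol_def
  using has_vector_derivative_real_field[OF has_field_derivative_weber_series]
    has_vector_derivative_real_field[OF has_field_derivative_weber_series_deriv]
  by simp

lemma weber_series_0: "weber_series z a b 0 = a" and weber_series_deriv_0: "weber_series_deriv z a b 0 = b"
  unfolding weber_series_def weber_series_deriv_def by (simp_all add: diffs_def)

lemma ode_sol_eq_weber_series:
  "ode_sol z a b = (\<lambda>x. weber_series z a b (of_real x), \<lambda>x. weber_series_deriv z a b (of_real x))"
  using ode_sol_eqI[OF is_weber_sol_weber_series] by (simp add: weber_series_0 weber_series_deriv_0)

lemma weber_series_holomorphic: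
  "(\<lambda>z. weber_series z a b \<xi>) holomorphic_on UNIV"
  "(\<lambda>z. weber_series_deriv z a b \<xi>) holomorphic_on UNIV"
proof -
  define D where "D = max (norm a) (norm b)"
  have bound: "norm (weber_coeff z a b k) \<le> D * (1 + R) ^ k / fact (k div 2)" if "norm z \<le> R" for z k R
    by (rule norm_weber_coeff_le) (use that in \<open>auto simp: D_def\<close>)
  show "(\<lambda>z. weber_series z a b \<xi>) holomorphic_on UNIV"
    unfolding weber_series_def using weber_coeff_holomorphic bound
    by (intro holomorphic_power_series_param) blast+
  have "0 \<le> D" unfolding D_def by (simp add: le_max_iff_disj)
  show "(\<lambda>z. weber_series_deriv z a b \<xi>) holomorphic_on UNIV"
    unfolding weber_series_deriv_def
  proof (intro holomorphic_power_series_param)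
    show "(\<lambda>z. diffs (weber_coeff z a b) k) holomorphic_on UNIV" for k
      unfolding diffs_def by (intro holomorphic_intros weber_coeff_holomorphic)
    fix R :: real
    show "\<exists>D' L'. \<forall>z k. norm z \<le> R \<longrightarrow>
        norm (diffs (weber_coeff z a b) k) \<le> D' * L' ^ k / fact (k div 2)"
    proof (intro exI allI impI)
      fix z :: complex and k :: nat
      assume "norm z \<le> R"
      then have "norm z \<le> \<bar>R\<bar>" by simp
      show "norm (diffs (weber_coeff z a b) k)
          \<le> (D * (1 + \<bar>R\<bar>)) * (2 * (1 + \<bar>R\<bar>)) ^ k / fact (k div 2)"
        by (rule norm_diffs_le[OF bound[OF \<open>norm z \<le> \<bar>R\<bar>\<close>] \<open>0 \<le> D\<close>]) simp
    qed
  qed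
qed

section \<open>Estimates for Theta\<close>

lemma is_weber_sol_ode_sol: "is_weber_sol z (fst (ode_sol z a b)) (snd (ode_sol z a b))"
  and ode_sol_initial: "fst (ode_sol z a b) 0 = a" "snd (ode_sol z a b) 0 = b"
  by (simp_all add: ode_sol_eq_weber_series is_weber_sol_weber_series
      weber_series_0 weber_series_deriv_0)

lemma ode_sol_linear:
  "fst (ode_sol z a b) x = a * fst (ode_sol z 1 0) x + b * fst (ode_sol z 0 1) x"
  "snd (ode_sol z a b) x = a * snd (ode_sol z 1 0) x + b * snd (ode_sol z 0 1) x"
proof -
  have "is_weber_sol z (\<lambda>x. a * fst (ode_sol z 1 0) x + b * fst (ode_sol z 0 1) x)
      (\<lambda>x. a * snd (ode_sol z 1 0) x + b * snd (ode_sol z 0 1) x)"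
    by (rule is_weber_sol_lincomb[OF is_weber_sol_ode_sol is_weber_sol_ode_sol])
  from ode_sol_eqI[OF this]
  have "ode_sol z a b = (\<lambda>x. a * fst (ode_sol z 1 0) x + b * fst (ode_sol z 0 1) x,
      \<lambda>x. a * snd (ode_sol z 1 0) x + b * snd (ode_sol z 0 1) x)"
    by (simp add: ode_sol_initial)
  then show "fst (ode_sol z a b) x = a * fst (ode_sol z 1 0) x + b * fst (ode_sol z 0 1) x"
    "snd (ode_sol z a b) x = a * snd (ode_sol z 1 0) x + b * snd (ode_sol z 0 1) x"
    by simp_all
qed

lemma Theta_affine: "Theta s n M w z = Theta s n M 0 z + w * (Theta s n M 1 z - Theta s n M 0 z)"
proof -
  define T where "T a b = snd (ode_sol z a b) (s * M) - \<i> * csqrt z * fst (ode_sol z a b) (s * M)"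
    for a b
  have "Theta s n M w z = fst (u_init n w) * T 1 0 + snd (u_init n w) * T 0 1" for w
    unfolding Theta_def u_sol_def du_sol_def T_def
      ode_sol_linear[of z "fst (u_init n w)" "snd (u_init n w)"]
    by (simp add: algebra_simps)
  then show ?thesis
    by (simp add: u_init_def algebra_simps)
qed

lemma deriv_Theta_w: "deriv (\<lambda>w. Theta s n M w z) w = Theta s n M 1 z - Theta s n M 0 z"
  and deriv2_Theta_w: "(deriv ^^ 2) (\<lambda>w. Theta s n M w z) w = 0"
proof -
  have "deriv (\<lambda>w. Theta s n M w z) = (\<lambda>w. Theta s n M 1 z - Theta s n M 0 z)"
    by (subst Theta_affine, rule ext, rule DERIV_imp_deriv) (auto intro!: derivative_eq_intros)
  then show "deriv (\<lambda>w. Theta s n M w z) w = Theta s n M 1 z - Theta s n M 0 z"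
    and "(deriv ^^ 2) (\<lambda>w. Theta s n M w z) w = 0"
    by (simp_all add: numeral_2_eq_2)
qed

lemma Theta_holomorphic: "(\<lambda>z. Theta s n M w z) holomorphic_on {z. 0 < Re z}"
proof -
  have "{z. 0 < Re z} \<subseteq> - \<real>\<^sub>\<le>\<^sub>0"
    by (auto simp: complex_nonpos_Reals_iff)
  then show ?thesis
    unfolding Theta_def u_sol_def du_sol_def ode_sol_eq_weber_series
    using weber_series_holomorphic[THEN holomorphic_on_subset, OF subset_UNIV]
    by (auto intro!: holomorphic_intros intro: holomorphic_on_subset)
qed

lemma norm_higher_deriv_le:
  assumes "f holomorphic_on S" and "open S" and "cball z r \<subseteq> S" and "0 < r"
    and "\<And>w. w \<in> S \<Longrightarrow> norm (f w) \<le> B"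
  shows "norm ((deriv ^^ k) f z) \<le> fact k * B / r ^ k"
proof (rule Cauchy_inequality)
  show "f holomorphic_on ball z r"
    using assms(1,3) ball_subset_cball holomorphic_on_subset by blast
  show "continuous_on (cball z r) f"
    using assms(1-3) holomorphic_on_imp_continuous_on continuous_on_subset by blast
  show "norm (f w) \<le> B" if "norm (z - w) = r" for w
    using that assms(3,5) by (auto simp: dist_norm)
qed (use assms in auto)

lemma ball_odd_bounds:
  assumes "z \<in> ball (of_nat (2 * n + 1)) 1"
  shows "0 < Re z" and "norm z \<le> real (2 * n + 2)"
proof -
  have d: "norm (z - of_nat (2 * n + 1)) < 1"
    using assms by (simp add: dist_norm norm_minus_commute)
  then show "0 < Re z"
    using abs_Re_le_cmod[of "z - of_nat (2 * n + 1)"] by simp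
  show "norm z \<le> real (2 * n + 2)"
    using norm_triangle_ineq[of "of_nat (2 * n + 1)" "z - of_nat (2 * n + 1)"] d
      norm_of_nat[of "2 * n + 1", where 'a=complex]
    by simp
qed

lemma norm_Theta_le:
  "norm (Theta s n M w z)
    \<le> (1 + sqrt (norm z)) * (norm (u_sol n w z (s * M)) + norm (du_sol n w z (s * M)))"
proof -
  define u u' where "u = norm (u_sol n w z (s * M))" and "u' = norm (du_sol n w z (s * M))"
  have "norm (Theta s n M w z) \<le> u' + sqrt (norm z) * u"
    using norm_triangle_ineq4[of "du_sol n w z (s * M)" "\<i> * csqrt z * u_sol n w z (s * M)"]
    unfolding Theta_def u_def u'_def by (simp add: norm_mult)
  moreover have "0 \<le> u" "0 \<le> sqrt (norm z) * u'"
    unfolding u_def u'_def by simp_all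
  ultimately show ?thesis
    unfolding u_def[symmetric] u'_def[symmetric] by (simp add: algebra_simps)
qed

lemma Theta_bound:
  fixes n :: nat
  obtains C where "0 < C"
    and "\<And>s M w z. \<bar>s\<bar> = 1 \<Longrightarrow> 1 \<le> M \<Longrightarrow> norm w \<le> 1 \<Longrightarrow> z \<in> ball (of_nat (2 * n + 1)) 1 \<Longrightarrow>
      norm (Theta s n M w z) \<le> C * M * exp (M\<^sup>2 / 2)"
proof -
  define Z where "Z = real (2 * n + 2)"
  obtain C0 where "0 < C0" and C0: "\<And>z y y' x. is_weber_sol z y y' \<Longrightarrow> 0 \<le> Re z \<Longrightarrow> norm z \<le> Z \<Longrightarrow>
      norm (y 0) \<le> 1 \<Longrightarrow> norm (y' 0) \<le> 1 \<Longrightarrow>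
      norm (y x) + norm (y' x) \<le> C0 * (1 + \<bar>x\<bar>) * exp (x\<^sup>2 / 2)"
    using weber_sol_growth by blast
  show ?thesis
  proof (rule that[of "2 * (1 + sqrt Z) * C0"])
    show "0 < 2 * (1 + sqrt Z) * C0"
      using \<open>0 < C0\<close> by (simp add: Z_def add_pos_nonneg)
    fix s M :: real and w z :: complex
    assume s: "\<bar>s\<bar> = 1" and M: "1 \<le> M" and w: "norm w \<le> 1" and z: "z \<in> ball (of_nat (2 * n + 1)) 1"
    have "s\<^sup>2 = 1"
      by (metis s power2_abs one_power2)
    then have "\<bar>s * M\<bar> = M" "(s * M)\<^sup>2 = M\<^sup>2"
      using s M by (simp_all add: abs_mult power_mult_distrib)
    then have "norm (u_sol n w z (s * M)) + norm (du_sol n w z (s * M)) \<le> C0 * (1 + M) * exp (M\<^sup>2 / 2)"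
      using C0[OF is_weber_sol_ode_sol, of z _ _ "s * M"] ball_odd_bounds[OF z] w
      unfolding u_sol_def du_sol_def Z_def by (simp add: ode_sol_initial u_init_def)
    also have "\<dots> \<le> C0 * (2 * M) * exp (M\<^sup>2 / 2)"
      using M \<open>0 < C0\<close> by (intro mult_right_mono mult_left_mono) auto
    moreover have "1 + sqrt (norm z) \<le> 1 + sqrt Z"
      using ball_odd_bounds(2)[OF z] by (simp add: Z_def)
    ultimately have "norm (Theta s n M w z) \<le> (1 + sqrt Z) * (C0 * (2 * M) * exp (M\<^sup>2 / 2))"
      using norm_Theta_le[of s n M w z] by (meson mult_mono order_trans add_nonneg_nonneg
          norm_ge_zero real_sqrt_ge_zero zero_le_one)
    then show "norm (Theta s n M w z) \<le> 2 * (1 + sqrt Z) * C0 * M * exp (M\<^sup>2 / 2)"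
      by (simp only: mult_ac)
  qed
qed

lemma Omega_radius_le:
  assumes "1 \<le> M"
  shows "M powr (- real (n + 2)) * exp (- M\<^sup>2 / 2) \<le> 2 / 3"
proof -
  have "M powr (- real (n + 2)) \<le> 1"
    using powr_mono2'[of "- real (n + 2)" 1 M] assms by simp
  moreover have "3 / 2 \<le> exp (1 / 2 :: real)"
    using exp_ge_add_one_self[of "1 / 2 :: real"] by simp
  then have "exp (- M\<^sup>2 / 2) \<le> 2 / 3"
    using assms one_le_power[OF assms, of 2] by (simp add: exp_minus field_simps order_trans)
  ultimately have "M powr (- real (n + 2)) * exp (- M\<^sup>2 / 2) \<le> 1 * (2 / 3)"
    by (intro mult_mono) auto
  then show ?thesis
    by simp
qed

lemma Omega_subset_ball:
  assumes "(w, z) \<in> Omega M n" and "1 \<le> M"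
  shows "norm w \<le> 1" and "cball z (1 / 4) \<subseteq> ball (of_nat (2 * n + 1)) 1"
proof -
  have "dist (eta n) (w, z) \<le> 2 / 3"
    using assms Omega_radius_le[OF assms(2), of n] unfolding Omega_def by auto
  then have "norm w \<le> 2 / 3" "dist (of_nat (2 * n + 1)) z \<le> 2 / 3"
    using dist_fst_le[of "eta n" "(w, z)"] dist_snd_le[of "eta n" "(w, z)"]
    unfolding eta_def by auto
  then show "norm w \<le> 1" "cball z (1 / 4) \<subseteq> ball (of_nat (2 * n + 1)) 1"
    by (auto simp: cball_subset_ball_iff dist_commute)
qed

lemma norm_higher_deriv_Theta_le:
  assumes "\<And>z. z \<in> ball (of_nat (2 * n + 1)) 1 \<Longrightarrow> norm (Theta s n M w z) \<le> B"
    and "cball z r \<subseteq> ball (of_nat (2 * n + 1)) 1" and "0 < r"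
  shows "norm ((deriv ^^ k) (\<lambda>z. Theta s n M w z) z) \<le> fact k * B / r ^ k"
proof (rule norm_higher_deriv_le[OF _ open_ball assms(2,3,1)])
  have "ball (of_nat (2 * n + 1)) 1 \<subseteq> {z. 0 < Re z}"
    using ball_odd_bounds(1) by blast
  then show "(\<lambda>z. Theta s n M w z) holomorphic_on ball (of_nat (2 * n + 1)) 1"
    by (rule holomorphic_on_subset[OF Theta_holomorphic])
qed

lemma Theta_derivative_bounds:
  assumes bound: "\<And>w z. norm w \<le> 1 \<Longrightarrow> z \<in> ball (of_nat (2 * n + 1)) 1 \<Longrightarrow> norm (Theta s n M w z) \<le> B"
    and M: "1 \<le> M"
  shows "norm (deriv (\<lambda>z. Theta s n M 0 z) (of_nat (2 * n + 1))) \<le> 32 * B"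
    and "norm (deriv (\<lambda>w. Theta s n M w (of_nat (2 * n + 1))) 0) \<le> 32 * B"
    and "(w, z) \<in> Omega M n \<Longrightarrow> norm ((deriv ^^ 2) (\<lambda>z'. Theta s n M w z') z) \<le> 32 * B"
    and "(w, z) \<in> Omega M n \<Longrightarrow> norm ((deriv ^^ 2) (\<lambda>w'. Theta s n M w' z) w) \<le> 32 * B"
proof -
  have "0 \<le> B"
    using order_trans[OF norm_ge_zero bound[of 0 "of_nat (2 * n + 1)"]] by simp
  show "norm (deriv (\<lambda>z. Theta s n M 0 z) (of_nat (2 * n + 1))) \<le> 32 * B"
    using norm_higher_deriv_Theta_le[OF bound, of 0 "of_nat (2 * n + 1)" "1 / 2" 1] \<open>0 \<le> B\<close>
    by (simp add: cball_subset_ball_iff)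
  have "norm (Theta s n M 1 (of_nat (2 * n + 1)) - Theta s n M 0 (of_nat (2 * n + 1))) \<le> B + B"
    by (rule order_trans[OF norm_triangle_ineq4 add_mono]) (auto intro!: bound)
  then show "norm (deriv (\<lambda>w. Theta s n M w (of_nat (2 * n + 1))) 0) \<le> 32 * B"
    unfolding deriv_Theta_w using \<open>0 \<le> B\<close> by simp
  assume wz: "(w, z) \<in> Omega M n"
  show "norm ((deriv ^^ 2) (\<lambda>z'. Theta s n M w z') z) \<le> 32 * B"
    using norm_higher_deriv_Theta_le[OF bound[OF Omega_subset_ball(1)[OF wz M]]
        Omega_subset_ball(2)[OF wz M], of 2]
    by (simp add: fact_numeral power2_eq_square)
  show "norm ((deriv ^^ 2) (\<lambda>w'. Theta s n M w' z) w) \<le> 32 * B"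
    unfolding deriv2_Theta_w using \<open>0 \<le> B\<close> by simp
qed

theorem lemma8p2:
  fixes n :: nat
  shows "\<exists>C>0. \<forall>M\<ge>1. \<forall>s\<in>{1, -1::real}.
    norm (deriv (\<lambda>z. Theta s n M 0 z) (of_nat (2 * n + 1))) \<le> C * M ^ (n + 1) * exp (M\<^sup>2 / 2) \<and>
    norm (deriv (\<lambda>w. Theta s n M w (of_nat (2 * n + 1))) 0) \<le> C * M ^ (n + 1) * exp (M\<^sup>2 / 2) \<and>
    (\<forall>(w, z)\<in>Omega M n.
       norm ((deriv ^^ 2) (\<lambda>z'. Theta s n M w z') z) \<le> C * M ^ (n + 1) * exp (M\<^sup>2 / 2) \<and>
       norm ((deriv ^^ 2) (\<lambda>w'. Theta s n M w' z) w) \<le> C * M ^ (n + 1) * exp (M\<^sup>2 / 2))"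
proof -
  obtain C where "0 < C" and Theta_le: "\<And>s M w z. \<bar>s\<bar> = 1 \<Longrightarrow> 1 \<le> M \<Longrightarrow> norm w \<le> 1 \<Longrightarrow>
      z \<in> ball (of_nat (2 * n + 1)) 1 \<Longrightarrow> norm (Theta s n M w z) \<le> C * M * exp (M\<^sup>2 / 2)"
    using Theta_bound by blast
  show ?thesis
  proof (intro exI[of _ "32 * C"] conjI allI impI ballI)
    show "0 < 32 * C"
      using \<open>0 < C\<close> by simp
    fix M s :: real
    assume M: "1 \<le> M" and "s \<in> {1, -1}"
    then have "\<bar>s\<bar> = 1" by auto
    note bounds = Theta_derivative_bounds[OF Theta_le[OF this M] M]
    have grow: "32 * (C * M * exp (M\<^sup>2 / 2)) \<le> 32 * C * M ^ (n + 1) * exp (M\<^sup>2 / 2)"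
      using \<open>0 < C\<close> M power_increasing[of 1 "n + 1" M] by (auto intro!: mult_right_mono mult_left_mono)
    show "norm (deriv (\<lambda>z. Theta s n M 0 z) (of_nat (2 * n + 1))) \<le> 32 * C * M ^ (n + 1) * exp (M\<^sup>2 / 2)"
      "norm (deriv (\<lambda>w. Theta s n M w (of_nat (2 * n + 1))) 0) \<le> 32 * C * M ^ (n + 1) * exp (M\<^sup>2 / 2)"
      using bounds(1,2) grow by linarith+
    fix p assume "p \<in> Omega M n"
    then show "case p of (w, z) \<Rightarrow>
        norm ((deriv ^^ 2) (\<lambda>z'. Theta s n M w z') z) \<le> 32 * C * M ^ (n + 1) * exp (M\<^sup>2 / 2) \<and>
        norm ((deriv ^^ 2) (\<lambda>w'. Theta s n M w' z) w) \<le> 32 * C * M ^ (n + 1) * exp (M\<^sup>2 / 2)"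
      using bounds(3,4) grow by (cases p) force
  qed
qed

end
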